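(* There is an absolute constant $c>0$ such that for every $n\ge1$, $L>0$, $T\ge 1$, and every deterministic sequential query strategy on $[0,1]^n$ (i.e. $x_1\in[0,1]^n$ is fixed and each $x_{t+1}\in[0,1]^n$ is a function of $x_1,\dots,x_t$ and $f(x_1),\dots,f(x_t)$), there exists a function $f:[0,1]^n\to\mathbb{R}$ with $|f(x)-f(y)|\le L\|x-y\|$ for all $x,y\in[0,1]^n$ such that the queries $x_1,\dots,x_T$ produced by the strategy on $f$ satisfy $$\frac1T\sum_{t=1}^T f(x_t)-\min_{x\in[0,1]^n}f(x)\ \ge\ c\,L\sqrt{n}\,T^{-1/n}.$$
   Context: $\|\cdot\|$ denotes the Euclidean norm on $\mathbb{R}^n$. *)

theory Defs
  imports "HOL-Analysis.Analysis"
begin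

text \<open>Points of R^n are represented as functions nat => real that vanish at indices >= n.\<close>

definition cube :: "nat \<Rightarrow> (nat \<Rightarrow> real) set" where
  "cube n = {x. (\<forall>i<n. 0 \<le> x i \<and> x i \<le> 1) \<and> (\<forall>i\<ge>n. x i = 0)}"

definition enorm :: "nat \<Rightarrow> (nat \<Rightarrow> real) \<Rightarrow> real" where
  "enorm n x = sqrt (\<Sum>i<n. (x i)\<^sup>2)"

text \<open>A deterministic sequential query strategy S maps the history
  [(x_1, f x_1), ..., (x_t, f x_t)] to the next query x_{t+1}; x_1 = S [].
  hist S f t is the history after t queries.\<close>

fun hist :: "(((nat \<Rightarrow> real) \<times> real) list \<Rightarrow> (nat \<Rightarrow> real)) \<Rightarrow> ((nat \<Rightarrow> real) \<Rightarrow> real)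
    \<Rightarrow> nat \<Rightarrow> ((nat \<Rightarrow> real) \<times> real) list" where
  "hist S f 0 = []"
| "hist S f (Suc t) = hist S f t @ [(S (hist S f t), f (S (hist S f t)))]"

text \<open>query S f t is x_{t+1} (0-indexed).\<close>
definition query :: "(((nat \<Rightarrow> real) \<times> real) list \<Rightarrow> (nat \<Rightarrow> real)) \<Rightarrow> ((nat \<Rightarrow> real) \<Rightarrow> real)
    \<Rightarrow> nat \<Rightarrow> (nat \<Rightarrow> real)" where
  "query S f t = S (hist S f t)"

end

theory Submission
  imports Defs
begin

text \<open>Run the strategy against the zero function and let \<open>q\<^sub>1, \<dots>, q\<^sub>T\<close> be its queries.
  The function \<open>f = -L \<cdot> dist(\<cdot>, {q\<^sub>1, \<dots>, q\<^sub>T})\<close> is \<open>L\<close>-Lipschitz and vanishes at every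
  \<open>q\<^sub>t\<close>, so the strategy asks the same queries on \<open>f\<close> and its average value is \<open>0\<close>,
  while \<open>min f \<le> -L r\<close> for any point at distance \<open>r\<close> from all queries.
  Such a point with \<open>r = \<surd>n / (2m)\<close> is found among the \<open>m\<^sup>n\<close> cell centres of the grid of
  mesh \<open>1/m\<close>, \<open>m \<approx> 11 T\<^bsup>1/n\<^esup>\<close>: the Gaussian weights \<open>exp (n - 4m^2 \<parallel>c - q\<^sub>t\<parallel>^2)\<close>, summed
  over all centres \<open>c\<close>, factor over the coordinates and total at most \<open>(4e)\<^sup>n < m\<^sup>n / T\<close> per
  query, so some centre has weight below \<open>1\<close> for every query.\<close>

definition cell_center :: "nat \<Rightarrow> nat \<Rightarrow> real" where
  "cell_center m j = (2 * real j + 1) / (2 * real m)"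

lemma sum_half_power_le_2: "(\<Sum>j<m. (1/2::real) ^ j) \<le> 2"
proof -
  have "(\<Sum>j<m. (1/2::real) ^ j) = 2 - 2 * (1/2) ^ m"
    by (induction m) auto
  thus ?thesis by simp
qed

lemma sum_half_power_dist_le_4:
  "(\<Sum>j<m. (1/2::real) ^ (if c \<le> j then j - c else c - j)) \<le> 4"
proof -
  let ?h = "\<lambda>j. (1/2::real) ^ (if c \<le> j then j - c else c - j)"
  have "(\<Sum>j<m. ?h j) \<le> (\<Sum>j\<in>{..<c} \<union> {c..<c+m}. ?h j)"
    by (intro sum_mono2) auto
  also have "\<dots> = (\<Sum>j<c. ?h j) + (\<Sum>j\<in>{c..<c+m}. ?h j)"
    by (intro sum.union_disjoint) auto
  also have "(\<Sum>j<c. ?h j) = (\<Sum>i<c. (1/2::real) ^ Suc i)"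
    by (subst sum.nat_diff_reindex[symmetric]) (intro sum.cong, auto simp: Suc_diff_Suc)
  also have "\<dots> \<le> (\<Sum>i<c. (1/2::real) ^ i)"
    by (intro sum_mono) auto
  also have "(\<Sum>j\<in>{c..<c+m}. ?h j) = (\<Sum>j\<in>{0+c..<m+c}. (1/2::real) ^ (j - c))"
    by (intro sum.cong) (auto simp: add.commute)
  also have "\<dots> = (\<Sum>j<m. (1/2::real) ^ j)"
    by (subst sum.shift_bounds_nat_ivl) (simp add: lessThan_atLeast0)
  finally show ?thesis using sum_half_power_le_2[of c] sum_half_power_le_2[of m] by linarith
qed

lemma exp_neg_square_le_half_power:
  fixes y :: real
  assumes "real d \<le> y"
  shows "exp (- (y^2)) \<le> (1/2) ^ d"
proof -
  have "real d \<le> (real d)^2"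
    by (metis le_square of_nat_le_iff of_nat_power power2_eq_square)
  also have "\<dots> \<le> y^2" using assms by (intro power_mono) auto
  finally have "exp (- (y^2)) \<le> exp (- real d)" by simp
  also have "\<dots> = exp (-1) ^ d"
    using exp_of_nat_mult[of d "-1"] by simp
  also have "\<dots> \<le> (1/2) ^ d"
  proof (intro power_mono)
    have "2 \<le> exp (1::real)" using exp_ge_add_one_self[of 1] by simp
    thus "exp (-1) \<le> (1/2::real)" by (simp add: exp_minus field_simps)
  qed auto
  finally show ?thesis .
qed

lemma cell_index_distance:
  fixes x :: real
  assumes "0 \<le> x" "x \<le> 1" "m \<ge> 1"
  obtains c where
    "\<And>j. real (if c \<le> j then j - c else c - j) \<le> 2 * real m * \<bar>cell_center m j - x\<bar>"
proof -
  define c where "c = min (m - 1) (nat \<lfloor>m * x\<rfloor>)"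
  have "real c \<le> real (nat \<lfloor>m * x\<rfloor>)" unfolding c_def by simp
  also have "\<dots> \<le> m * x" using assms(1) by simp
  finally have c_le: "real c \<le> m * x" .
  have le_c: "m * x \<le> real c + 1"
  proof (cases "nat \<lfloor>m * x\<rfloor> \<le> m - 1")
    case True
    thus ?thesis using assms(1) unfolding c_def by (simp add: of_nat_nat min_def)
  next
    case False
    hence "real c + 1 = m" using assms(3) unfolding c_def by simp
    thus ?thesis using assms by (simp add: mult_left_le)
  qed
  have "real (if c \<le> j then j - c else c - j) \<le> 2 * real m * \<bar>cell_center m j - x\<bar>" for j
  proof -
    let ?y = "2 * real j + 1 - 2 * (m * x)"
    have y: "2 * real m * \<bar>cell_center m j - x\<bar> = \<bar>?y\<bar>"
      using assms(3) unfolding cell_center_def by (simp add: abs_mult[symmetric] field_simps)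
    consider "c < j" | "c = j" | "j < c" by linarith
    thus ?thesis
    proof cases
      case 1
      hence "real c + 1 \<le> real j" "real (if c \<le> j then j - c else c - j) = real j - real c"
        by (simp_all add: of_nat_diff Suc_le_eq[symmetric] del: of_nat_Suc)
      thus ?thesis using y le_c abs_ge_self[of ?y] by linarith
    next
      case 3
      hence "real j + 1 \<le> real c" "real (if c \<le> j then j - c else c - j) = real c - real j"
        by (simp_all add: of_nat_diff Suc_le_eq[symmetric] del: of_nat_Suc)
      thus ?thesis using y c_le abs_ge_minus_self[of ?y] by linarith
    qed (simp add: y)
  qed
  thus ?thesis by (rule that)
qed

lemma sum_exp_cell_center_le_4:
  fixes x :: real
  assumes "0 \<le> x" "x \<le> 1" "m \<ge> 1"
  shows "(\<Sum>j<m. exp (- (4 * real m^2) * (cell_center m j - x)^2)) \<le> 4"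
proof -
  obtain c where c:
    "\<And>j. real (if c \<le> j then j - c else c - j) \<le> 2 * real m * \<bar>cell_center m j - x\<bar>"
    using cell_index_distance[OF assms] by blast
  have "exp (- (4 * real m^2) * (cell_center m j - x)^2)
      = exp (- ((2 * real m * \<bar>cell_center m j - x\<bar>)^2))" for j
    by (simp add: power_mult_distrib)
  hence "(\<Sum>j<m. exp (- (4 * real m^2) * (cell_center m j - x)^2))
      \<le> (\<Sum>j<m. (1/2::real) ^ (if c \<le> j then j - c else c - j))"
    using exp_neg_square_le_half_power[OF c] by (intro sum_mono) auto
  also have "\<dots> \<le> 4" by (rule sum_half_power_dist_le_4)
  finally show ?thesis .
qed

lemma sum_grid_gaussian_le:
  fixes p :: "nat \<Rightarrow> real"
  assumes "m \<ge> 1" and "\<And>i. i < n \<Longrightarrow> 0 \<le> p i \<and> p i \<le> 1"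
  shows "(\<Sum>g\<in>PiE {..<n} (\<lambda>_. {..<m}).
           exp (real n - 4 * real m^2 * (\<Sum>i<n. (cell_center m (g i) - p i)^2)))
         \<le> (exp 1 * 4) ^ n"
proof -
  let ?w = "\<lambda>i j. exp (- (4 * real m^2) * (cell_center m j - p i)^2)"
  have "exp (real n - 4 * real m^2 * (\<Sum>i<n. (cell_center m (g i) - p i)^2))
      = exp 1 ^ n * (\<Prod>i<n. ?w i (g i))" for g
  proof -
    have "real n - 4 * real m^2 * (\<Sum>i<n. (cell_center m (g i) - p i)^2)
        = real n + (\<Sum>i<n. - (4 * real m^2) * (cell_center m (g i) - p i)^2)"
      by (simp add: sum_distrib_left sum_negf)
    moreover have "exp (real n) = exp 1 ^ n"
      using exp_of_nat_mult[of n 1] by simp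
    ultimately show ?thesis
      by (simp only: exp_add exp_sum[OF finite_lessThan])
  qed
  hence "(\<Sum>g\<in>PiE {..<n} (\<lambda>_. {..<m}).
           exp (real n - 4 * real m^2 * (\<Sum>i<n. (cell_center m (g i) - p i)^2)))
      = exp 1 ^ n * (\<Sum>g\<in>PiE {..<n} (\<lambda>_. {..<m}). \<Prod>i<n. ?w i (g i))"
    by (simp add: sum_distrib_left)
  also have "(\<Sum>g\<in>PiE {..<n} (\<lambda>_. {..<m}). \<Prod>i<n. ?w i (g i)) = (\<Prod>i<n. \<Sum>j<m. ?w i j)"
    by (rule prod_sum_PiE[symmetric]) auto
  also have "(\<Prod>i<n. \<Sum>j<m. ?w i j) \<le> (\<Prod>i<n. 4)"
    using assms by (intro prod_mono conjI sum_exp_cell_center_le_4 sum_nonneg) auto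
  finally show ?thesis
    by (simp add: power_mult_distrib mult_left_mono)
qed

lemma grid_center_far_from_points:
  fixes q :: "nat \<Rightarrow> nat \<Rightarrow> real"
  assumes m: "m \<ge> 1" and q: "\<And>t i. t < T \<Longrightarrow> i < n \<Longrightarrow> 0 \<le> q t i \<and> q t i \<le> 1"
    and few: "real T * (exp 1 * 4) ^ n < real m ^ n"
  shows "\<exists>g\<in>PiE {..<n} (\<lambda>_. {..<m}). \<forall>t<T.
           real n / (4 * real m^2) \<le> (\<Sum>i<n. (cell_center m (g i) - q t i)^2)"
proof (rule ccontr)
  let ?G = "PiE {..<n} (\<lambda>_. {..<m})"
  define w where "w g t = exp (real n - 4 * real m^2 * (\<Sum>i<n. (cell_center m (g i) - q t i)^2))"
    for g t
  assume no_far_center: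
    "\<not> (\<exists>g\<in>?G. \<forall>t<T. real n / (4 * real m^2) \<le> (\<Sum>i<n. (cell_center m (g i) - q t i)^2))"
  have weight_ge_1: "1 \<le> (\<Sum>t<T. w g t)" if g: "g \<in> ?G" for g
  proof -
    obtain t where t: "t < T" "\<not> real n / (4 * real m^2) \<le> (\<Sum>i<n. (cell_center m (g i) - q t i)^2)"
      using no_far_center g by blast
    moreover have "0 < 4 * real m^2" using m by simp
    ultimately have "(\<Sum>i<n. (cell_center m (g i) - q t i)^2) * (4 * real m^2) < real n"
      by (simp only: not_le pos_less_divide_eq)
    hence "1 \<le> w g t" unfolding w_def by (simp add: mult.commute)
    also have "\<dots> \<le> (\<Sum>t<T. w g t)"
      using t(1) by (intro member_le_sum) (simp_all add: w_def)
    finally show ?thesis .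
  qed
  have "real m ^ n = (\<Sum>g\<in>?G. 1)"
    by (simp add: card_PiE)
  also have "\<dots> \<le> (\<Sum>g\<in>?G. \<Sum>t<T. w g t)"
    by (intro sum_mono weight_ge_1)
  also have "\<dots> = (\<Sum>t<T. \<Sum>g\<in>?G. w g t)"
    by (rule sum.swap)
  also have "\<dots> \<le> (\<Sum>t<T. (exp 1 * 4) ^ n)"
    unfolding w_def using m q by (intro sum_mono sum_grid_gaussian_le) auto
  finally show False using few by simp
qed

lemma enorm_nonneg: "enorm n x \<ge> 0"
  unfolding enorm_def by (simp add: sum_nonneg)

lemma enorm_commute: "enorm n (x - y) = enorm n (y - x)"
  unfolding enorm_def by (simp add: power2_commute)

lemma enorm_triangle: "enorm n (x - z) \<le> enorm n (x - y) + enorm n (y - z)"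
proof -
  have L2: "enorm n v = L2_set v {..<n}" for v
    unfolding enorm_def L2_set_def by simp
  have "enorm n (x - z) = L2_set (\<lambda>i. (x - y) i + (y - z) i) {..<n}"
    unfolding L2 by (simp add: fun_diff_def)
  also have "\<dots> \<le> enorm n (x - y) + enorm n (y - z)"
    unfolding L2 by (rule L2_set_triangle_ineq)
  finally show ?thesis .
qed

lemma enorm_diff_cube_le:
  assumes "x \<in> cube n" "y \<in> cube n"
  shows "enorm n (x - y) \<le> sqrt (real n)"
proof -
  have "((x - y) i)^2 \<le> 1" if "i < n" for i
  proof -
    have "0 \<le> x i" "x i \<le> 1" "0 \<le> y i" "y i \<le> 1"
      using assms that unfolding cube_def by auto
    hence "\<bar>x i - y i\<bar> \<le> 1" by linarith
    thus ?thesis by (simp add: abs_square_le_1)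
  qed
  hence "(\<Sum>i<n. ((x - y) i)^2) \<le> (\<Sum>i<n. 1)"
    by (intro sum_mono) auto
  thus ?thesis unfolding enorm_def by simp
qed

lemma far_point_in_cube:
  assumes n: "n \<ge> 1" and T: "T \<ge> 1" and q: "\<And>t. t < T \<Longrightarrow> q t \<in> cube n"
  shows "\<exists>z\<in>cube n. \<forall>t<T.
           sqrt (real n) * real T powr (- 1 / real n) / 24 \<le> enorm n (z - q t)"
proof -
  define a where "a = real T powr (1 / real n)"
  have a1: "a \<ge> 1" unfolding a_def using T by (intro ge_one_powr_ge_zero) auto
  have an: "a ^ n = real T"
    using a1 n T unfolding a_def by (simp add: powr_realpow[symmetric] powr_powr)
  define m where "m = nat \<lfloor>11 * a\<rfloor> + 1"
  have m1: "m \<ge> 1" unfolding m_def by simp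
  have m_gt: "real m > 11 * a" and m_le: "real m \<le> 12 * a"
    unfolding m_def using a1 by linarith+
  have "real T * (exp 1 * 4) ^ n < real T * 11 ^ n"
    using e_less_272 n T by (intro mult_strict_left_mono power_strict_mono) auto
  also have "\<dots> = (11 * a) ^ n" using an by (simp add: power_mult_distrib)
  also have "\<dots> \<le> real m ^ n" using m_gt a1 by (intro power_mono) auto
  finally obtain g where g: "g \<in> PiE {..<n} (\<lambda>_. {..<m})" and
    far: "\<forall>t<T. real n / (4 * real m^2) \<le> (\<Sum>i<n. (cell_center m (g i) - q t i)^2)"
    using grid_center_far_from_points[OF m1, of T n q] q unfolding cube_def by blast
  define z where "z i = (if i < n then cell_center m (g i) else 0)" for i
  have "cell_center m (g i) \<le> 1" if "i < n" for i
  proof -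
    have "g i + 1 \<le> m" using g that by (auto simp: PiE_iff Suc_le_eq)
    hence "2 * real (g i) + 1 \<le> 2 * real m" by linarith
    thus ?thesis using m1 unfolding cell_center_def by simp
  qed
  hence "z \<in> cube n"
    unfolding cube_def z_def cell_center_def by auto
  moreover have "sqrt (real n) * real T powr (- 1 / real n) / 24 \<le> enorm n (z - q t)"
    if "t < T" for t
  proof -
    have "sqrt (real n) * real T powr (- 1 / real n) / 24 = sqrt (real n) / (24 * a)"
      unfolding a_def by (simp add: powr_minus_divide)
    also have "\<dots> \<le> sqrt (real n) / (2 * real m)"
      using m_le m1 a1 by (intro divide_left_mono) auto
    also have "\<dots> = sqrt (real n / (4 * real m^2))"
      by (simp add: real_sqrt_divide real_sqrt_mult power2_eq_square)
    also have "\<dots> \<le> enorm n (z - q t)"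
      using far that unfolding enorm_def z_def by simp
    finally show ?thesis .
  qed
  ultimately show ?thesis by blast
qed

definition mindist :: "nat \<Rightarrow> nat \<Rightarrow> (nat \<Rightarrow> nat \<Rightarrow> real) \<Rightarrow> (nat \<Rightarrow> real) \<Rightarrow> real" where
  "mindist n T q x = Min ((\<lambda>t. enorm n (x - q t)) ` {..<T})"

lemma mindist_le: "t < T \<Longrightarrow> mindist n T q x \<le> enorm n (x - q t)"
  unfolding mindist_def by (intro Min_le) auto

lemma mindist_attained:
  assumes "T \<ge> 1"
  obtains t where "t < T" "mindist n T q x = enorm n (x - q t)"
proof -
  have "mindist n T q x \<in> (\<lambda>t. enorm n (x - q t)) ` {..<T}"
    unfolding mindist_def using assms by (intro Min_in) (auto simp: lessThan_empty_iff)
  thus ?thesis using that by blast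
qed

lemma mindist_ge:
  assumes "T \<ge> 1" and "\<And>t. t < T \<Longrightarrow> r \<le> enorm n (x - q t)"
  shows "r \<le> mindist n T q x"
  using mindist_attained[OF assms(1)] assms(2) by metis

lemma mindist_at_point:
  assumes "t < T"
  shows "mindist n T q (q t) = 0"
proof -
  have "mindist n T q (q t) \<le> 0"
    using mindist_le[OF assms, of n q "q t"] by (simp add: enorm_def)
  moreover have "mindist n T q (q t) \<ge> 0"
    using assms by (intro mindist_ge) (auto simp: enorm_nonneg)
  ultimately show ?thesis by simp
qed

lemma mindist_le_sqrt_dim:
  assumes "T \<ge> 1" and "\<And>t. t < T \<Longrightarrow> q t \<in> cube n" and "x \<in> cube n"
  shows "mindist n T q x \<le> sqrt (real n)"
proof -
  have "mindist n T q x \<le> enorm n (x - q 0)"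
    using assms(1) by (intro mindist_le) simp
  also have "\<dots> \<le> sqrt (real n)"
    using assms by (intro enorm_diff_cube_le) auto
  finally show ?thesis .
qed

lemma mindist_lipschitz:
  assumes "T \<ge> 1"
  shows "\<bar>mindist n T q x - mindist n T q y\<bar> \<le> enorm n (x - y)"
proof -
  have one_sided: "mindist n T q x \<le> mindist n T q y + enorm n (x - y)" for x y
  proof -
    obtain t where "t < T" "mindist n T q y = enorm n (y - q t)"
      using mindist_attained[OF assms] .
    thus ?thesis
      using mindist_le[of t T n q x] enorm_triangle[of n x "q t" y] by (simp add: add.commute)
  qed
  thus ?thesis
    using one_sided[of x y] one_sided[of y x] enorm_commute[of n x y] by linarith
qed

lemma query_eq_if_agree_on_queries:
  assumes "\<And>t. t < T \<Longrightarrow> f (query S g t) = g (query S g t)"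
  shows "t < T \<Longrightarrow> query S f t = query S g t"
proof -
  have "t \<le> T \<Longrightarrow> hist S f t = hist S g t" for t
    using assms by (induction t) (auto simp: query_def)
  thus "t < T \<Longrightarrow> query S f t = query S g t"
    by (simp add: query_def)
qed

theorem theorem2:
  shows "\<exists>c::real. c > 0 \<and>
    (\<forall>(n::nat) (L::real) (T::nat) (S :: ((nat \<Rightarrow> real) \<times> real) list \<Rightarrow> (nat \<Rightarrow> real)).
       n \<ge> 1 \<longrightarrow> L > 0 \<longrightarrow> T \<ge> 1 \<longrightarrow> (\<forall>h. S h \<in> cube n) \<longrightarrow>
       (\<exists>f :: (nat \<Rightarrow> real) \<Rightarrow> real.
          (\<forall>x\<in>cube n. \<forall>y\<in>cube n. \<bar>f x - f y\<bar> \<le> L * enorm n (x - y)) \<and>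
          (\<Sum>t<T. f (query S f t)) / real T - Inf (f ` cube n)
            \<ge> c * L * sqrt (real n) * real T powr (- 1 / real n)))"
proof (intro exI[of _ "1/24"] conjI allI impI)
  fix n :: nat and L :: real and T :: nat and S :: "((nat \<Rightarrow> real) \<times> real) list \<Rightarrow> (nat \<Rightarrow> real)"
  assume n: "n \<ge> 1" and L: "L > 0" and T: "T \<ge> 1" and S: "\<forall>h. S h \<in> cube n"
  define q where "q = query S (\<lambda>_. 0)"
  have queries: "q t \<in> cube n" if "t < T" for t
    using S by (simp add: q_def query_def)
  define f where "f x = - L * mindist n T q x" for x
  have lip: "\<forall>x\<in>cube n. \<forall>y\<in>cube n. \<bar>f x - f y\<bar> \<le> L * enorm n (x - y)"
    using mindist_lipschitz[OF T] L
    by (simp add: f_def abs_mult right_diff_distrib[symmetric] abs_minus_commute)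
  have "query S f t = q t" if "t < T" for t
    using query_eq_if_agree_on_queries[of T f S "\<lambda>_. 0"] mindist_at_point that
    by (simp add: q_def f_def)
  hence avg: "(\<Sum>t<T. f (query S f t)) = 0"
    by (simp add: f_def mindist_at_point)
  obtain z where z: "z \<in> cube n" and
    far: "\<forall>t<T. sqrt (real n) * real T powr (- 1 / real n) / 24 \<le> enorm n (z - q t)"
    using far_point_in_cube[OF n T] queries by blast
  have "- L * sqrt (real n) \<le> f x" if "x \<in> cube n" for x
    using mindist_le_sqrt_dim[OF T queries that] L by (simp add: f_def)
  hence "Inf (f ` cube n) \<le> f z"
    using z by (intro cInf_lower bdd_belowI2) auto
  also have "f z \<le> - L * (sqrt (real n) * real T powr (- 1 / real n) / 24)"
    using mindist_ge[OF T far[rule_format]] L by (simp add: f_def)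
  finally show "\<exists>f. (\<forall>x\<in>cube n. \<forall>y\<in>cube n. \<bar>f x - f y\<bar> \<le> L * enorm n (x - y)) \<and>
      (\<Sum>t<T. f (query S f t)) / real T - Inf (f ` cube n)
        \<ge> 1/24 * L * sqrt (real n) * real T powr (- 1 / real n)"
    using avg lip by (intro exI[of _ f]) simp
qed simp

end
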